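(* Let $N\ge3$ be odd. For every $s\in(1,2^{(N-1)/2})$ there exists $\theta_s\in\mathcal G$ such that $s=\langle M_N(\theta_s)\rangle$ if $N\equiv3\pmod4$, and $s=\langle\tilde M_N(\theta_s)\rangle$ if $N\equiv1\pmod 4$.
   Context: $\mathcal G=(\pi/4,\pi/2)\cup(\pi/2,3\pi/4)\cup(5\pi/4,3\pi/2)\cup(3\pi/2,7\pi/4)$. For $\bm x\in\{0,1\}^N$ let $|\bm x|=\sum_kx_k$, $c_{\bm x}=\cos\big[\frac\pi2\big(\frac{N-1}2-|\bm x|\big)\big]$. The MABK expression is $\langle M_N\rangle=2^{(1-N)/2}\sum_{\bm x}c_{\bm x}\langle A^{(1)}_{x_1}\cdots A^{(N)}_{x_N}\rangle$, with quantum maximum $2^{(N-1)/2}$. Consider the strategy with state $(|0\rangle^{\otimes N}+i|1\rangle^{\otimes N})/\sqrt2$ and $A^{(k)}_0=\sigma_X$, $A^{(k)}_1=\cos\theta\sigma_X+\sin\theta\sigma_Y$ for all $k$; its full correlator at input $\bm x$ is $\sin(|\bm x|\theta)$. Define $\langle M_N(\theta)\rangle:=2^{(1-N)/2}\sum_{\bm x}c_{\bm x}\sin(|\bm x|\theta)$ (its MABK value), and $\langle\tilde M_N(\theta)\rangle$ as the value on this strategy of the relabelled MABK expression obtained by substituting $A^{(k)}_0\mapsto A^{(k)}_1$, $A^{(k)}_1\mapsto -A^{(k)}_0$ for every party, i.e. $\langle\tilde M_N(\theta)\rangle=2^{(1-N)/2}\sum_{\bm x}c_{\bm x}(-1)^{|\bm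 x|}\sin((N-|\bm x|)\theta)$. *)

theory Defs
  imports "HOL-Analysis.Analysis" "HOL-Library.FuncSet"
begin

definition bitstrings :: "nat \<Rightarrow> (nat \<Rightarrow> nat) set" where
  "bitstrings N = PiE {0..<N} (\<lambda>_. {0, 1})"

definition weight :: "nat \<Rightarrow> (nat \<Rightarrow> nat) \<Rightarrow> nat" where
  "weight N x = (\<Sum>k<N. x k)"

definition mabk_coeff :: "nat \<Rightarrow> (nat \<Rightarrow> nat) \<Rightarrow> real" where
  "mabk_coeff N x = cos (pi / 2 * ((real N - 1) / 2 - real (weight N x)))"

definition M_val :: "nat \<Rightarrow> real \<Rightarrow> real" where
  "M_val N \<theta> = 2 powr ((1 - real N) / 2) *
     (\<Sum>x\<in>bitstrings N. mabk_coeff N x * sin (real (weight N x) * \<theta>))"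

definition Mtilde_val :: "nat \<Rightarrow> real \<Rightarrow> real" where
  "Mtilde_val N \<theta> = 2 powr ((1 - real N) / 2) *
     (\<Sum>x\<in>bitstrings N. mabk_coeff N x * (-1) ^ weight N x
        * sin ((real N - real (weight N x)) * \<theta>))"

definition G_set :: "real set" where
  "G_set = {pi/4<..<pi/2} \<union> {pi/2<..<3*pi/4} \<union> {5*pi/4<..<3*pi/2} \<union> {3*pi/2<..<7*pi/4}"

end

theory Submission
  imports Defs
begin

text \<open>
  Writing the MABK coefficient as \<open>cos (\<alpha> - |x| \<pi>/2)\<close> and splitting the products
  \<open>cos \<cdot> sin\<close> into sums, the binomial theorem for \<open>(1 + e^{i\<phi>})^N\<close> turns both
  the MABK value and its relabelled version into two terms of the form
  \<open>2^((N-1)/2) cos ((\<theta> \<mp> \<pi>/2)/2)^N sin (\<dots>)\<close>. For the phase \<alpha> belonging to the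
  residue of N mod 4 one has \<open>cos \<alpha> = 0\<close>, so one of the points \<open>\<pi>/2\<close>, \<open>3\<pi>/2\<close> attains
  the quantum maximum \<open>2^((N-1)/2)\<close>, while within distance \<open>\<pi>/4\<close> to its right the value
  drops to at most 1. The intermediate value theorem then gives \<open>\<theta>\<^sub>s\<close> in G_set.
\<close>

lemma cis_sum: "cis (\<Sum>k\<in>A. f k) = (\<Prod>k\<in>A. cis (f k))"
  by (induction A rule: infinite_finite_induct) (auto simp: cis_mult[symmetric])

lemma one_plus_cis: "1 + cis \<phi> = cis (\<phi>/2) * complex_of_real (2 * cos (\<phi>/2))"
proof -
  have "cos \<phi> = 2 * (cos (\<phi>/2))\<^sup>2 - 1" "sin \<phi> = 2 * sin (\<phi>/2) * cos (\<phi>/2)"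
    using cos_double[of "\<phi>/2"] sin_double[of "\<phi>/2"] by (simp_all add: cos_squared_eq)
  then show ?thesis by (simp add: complex_eq_iff power2_eq_square)
qed

lemma sum_bitstrings_cis:
  "(\<Sum>x\<in>bitstrings N. cis (real (weight N x) * \<phi>)) = (1 + cis \<phi>) ^ N"
proof -
  have "(\<Sum>x\<in>bitstrings N. cis (real (weight N x) * \<phi>))
      = (\<Sum>x\<in>bitstrings N. \<Prod>k\<in>{0..<N}. cis (real (x k) * \<phi>))"
    by (simp add: weight_def of_nat_sum sum_distrib_right cis_sum lessThan_atLeast0)
  also have "\<dots> = (\<Prod>k\<in>{0..<N}. \<Sum>v\<in>{0, 1::nat}. cis (real v * \<phi>))"
    unfolding bitstrings_def by (rule prod_sum_PiE[symmetric]) auto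
  finally show ?thesis by simp
qed

lemma sum_bitstrings_sin:
  "(\<Sum>x\<in>bitstrings N. sin (real (weight N x) * \<phi> + \<gamma>))
     = (2 * cos (\<phi>/2)) ^ N * sin (real N * \<phi> / 2 + \<gamma>)"
proof -
  have "(\<Sum>x\<in>bitstrings N. sin (real (weight N x) * \<phi> + \<gamma>))
      = Im (cis \<gamma> * (\<Sum>x\<in>bitstrings N. cis (real (weight N x) * \<phi>)))"
    by (simp add: sum_distrib_left cis_mult add.commute)
  also have "\<dots> = Im (cis (real N * \<phi> / 2 + \<gamma>) * complex_of_real ((2 * cos (\<phi>/2)) ^ N))"
  proof -
    have "cis (\<phi>/2) ^ N = cis (real N * \<phi> / 2)" unfolding Complex.DeMoivre by simp
    then show ?thesis
      by (simp add: sum_bitstrings_cis one_plus_cis power_mult_distrib cis_mult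
          mult.assoc[symmetric] add.commute)
  qed
  finally show ?thesis by simp
qed

lemma sum_bitstrings_cos_sin:
  "(\<Sum>x\<in>bitstrings N. cos (\<alpha> - real (weight N x) * pi/2) * sin (real (weight N x) * \<phi> + \<gamma>))
     = 2 ^ N / 2 * (cos ((\<phi> - pi/2)/2) ^ N * sin (real N * (\<phi> - pi/2)/2 + \<gamma> + \<alpha>)
                  + cos ((\<phi> + pi/2)/2) ^ N * sin (real N * (\<phi> + pi/2)/2 + \<gamma> - \<alpha>))"
proof -
  have product_to_sum: "cos (\<alpha> - w * pi/2) * sin (w * \<phi> + \<gamma>)
      = (sin (w * (\<phi> - pi/2) + (\<gamma> + \<alpha>)) + sin (w * (\<phi> + pi/2) + (\<gamma> - \<alpha>))) / 2" for w
  proof -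
    have "w * (\<phi> - pi/2) + (\<gamma> + \<alpha>) = (w * \<phi> + \<gamma>) + (\<alpha> - w * pi/2)"
         "w * (\<phi> + pi/2) + (\<gamma> - \<alpha>) = (w * \<phi> + \<gamma>) - (\<alpha> - w * pi/2)"
      by (simp_all add: algebra_simps)
    then show ?thesis by (simp only: sin_add sin_diff) simp
  qed
  have "(\<Sum>x\<in>bitstrings N. cos (\<alpha> - real (weight N x) * pi/2) * sin (real (weight N x) * \<phi> + \<gamma>))
      = ((2 * cos ((\<phi> - pi/2)/2)) ^ N * sin (real N * (\<phi> - pi/2)/2 + (\<gamma> + \<alpha>))
         + (2 * cos ((\<phi> + pi/2)/2)) ^ N * sin (real N * (\<phi> + pi/2)/2 + (\<gamma> - \<alpha>))) / 2"
    unfolding product_to_sum sum_divide_distrib[symmetric] sum.distrib sum_bitstrings_sin ..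
  then show ?thesis by (simp add: power_mult_distrib algebra_simps)
qed

definition mabk_profile :: "nat \<Rightarrow> real \<Rightarrow> real \<Rightarrow> real" where
  "mabk_profile N \<alpha> \<theta> = 2 powr ((real N - 1) / 2) *
     (cos ((\<theta> - pi/2)/2) ^ N * sin (real N * (\<theta> - pi/2)/2 + \<alpha>)
      + cos ((\<theta> + pi/2)/2) ^ N * sin (real N * (\<theta> + pi/2)/2 - \<alpha>))"

lemma powr_half_mult_power: "2 powr ((1 - real N) / 2) * (2 ^ N / 2) = (2 powr ((real N - 1) / 2) :: real)"
proof -
  have "(2::real) ^ N / 2 = 2 powr (real N - 1)" by (simp add: powr_diff powr_realpow)
  then show ?thesis by (simp add: powr_add[symmetric] field_simps)
qed

lemma mabk_coeff_eq: "mabk_coeff N x = cos (pi * (real N - 1) / 4 - real (weight N x) * pi/2)"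
  unfolding mabk_coeff_def by (rule arg_cong[where f = cos]) (simp add: algebra_simps)

lemma M_val_eq_mabk_profile: "M_val N \<theta> = mabk_profile N (pi * (real N - 1) / 4) \<theta>"
proof -
  have "M_val N \<theta> = 2 powr ((1 - real N) / 2) *
     (\<Sum>x\<in>bitstrings N. cos (pi * (real N - 1) / 4 - real (weight N x) * pi/2)
                              * sin (real (weight N x) * \<theta> + 0))"
    by (simp add: M_val_def mabk_coeff_eq)
  also have "\<dots> = mabk_profile N (pi * (real N - 1) / 4) \<theta>"
    unfolding sum_bitstrings_cos_sin mabk_profile_def powr_half_mult_power[symmetric] by simp
  finally show ?thesis .
qed

lemma Mtilde_val_eq_mabk_profile:
  assumes "odd N"
  shows "Mtilde_val N \<theta> = mabk_profile N (pi * (3 * real N - 1) / 4) \<theta>"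
proof -
  define a where "a = pi * (real N - 1) / 4"
  define b where "b = pi * (3 * real N - 1) / 4"
  \<comment> \<open>the relabelled sum is the MABK-type sum at \<open>\<pi> - \<theta>\<close>, shifted in phase by \<open>N \<theta>\<close>\<close>
  have sign_shift: "(-1) ^ weight N x * sin ((real N - real (weight N x)) * \<theta>)
      = sin (real (weight N x) * (pi - \<theta>) + real N * \<theta>)" for x
  proof -
    have "real (weight N x) * (pi - \<theta>) + real N * \<theta>
        = (real N - real (weight N x)) * \<theta> + real (weight N x) * pi"
      by (simp add: algebra_simps)
    then show ?thesis by (simp add: sin_add)
  qed
  have "Mtilde_val N \<theta> = 2 powr ((1 - real N) / 2) *
     (\<Sum>x\<in>bitstrings N. cos (a - real (weight N x) * pi/2)
                              * sin (real (weight N x) * (pi - \<theta>) + real N * \<theta>))"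
    by (simp add: Mtilde_val_def mabk_coeff_eq a_def sign_shift mult.assoc)
  also have "\<dots> = 2 powr ((real N - 1) / 2) *
     (cos ((pi - \<theta> - pi/2)/2) ^ N * sin (real N * (pi - \<theta> - pi/2)/2 + real N * \<theta> + a)
      + cos ((pi - \<theta> + pi/2)/2) ^ N * sin (real N * (pi - \<theta> + pi/2)/2 + real N * \<theta> - a))"
    unfolding sum_bitstrings_cos_sin powr_half_mult_power[symmetric] by simp
  also have "\<dots> = mabk_profile N b \<theta>"
  proof -
    have "cos ((pi - \<theta> - pi/2)/2) = cos ((\<theta> - pi/2)/2)"
    proof -
      have "(pi - \<theta> - pi/2)/2 = - ((\<theta> - pi/2)/2)" by (simp add: field_simps)
      then show ?thesis by (simp only: cos_minus)
    qed
    moreover have "real N * (pi - \<theta> - pi/2)/2 + real N * \<theta> + a = real N * (\<theta> - pi/2)/2 + b"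
      by (simp add: a_def b_def field_simps)
    moreover have "cos ((pi - \<theta> + pi/2)/2) = - cos ((\<theta> + pi/2)/2)"
      using cos_pi_minus[of "(\<theta> + pi/2)/2"] by (simp add: field_simps)
    moreover have "sin (real N * (pi - \<theta> + pi/2)/2 + real N * \<theta> - a) = - sin (real N * (\<theta> + pi/2)/2 - b)"
    proof -
      have "real N * (pi - \<theta> + pi/2)/2 + real N * \<theta> - a = (real N * (\<theta> + pi/2)/2 - b) + real N * pi"
        by (simp add: a_def b_def field_simps)
      then show ?thesis using assms by (simp add: sin_add)
    qed
    ultimately show ?thesis using assms by (simp add: mabk_profile_def power_minus_odd)
  qed
  finally show ?thesis unfolding b_def .
qed

lemma abs_power_mult_sin_le: "\<bar>(c::real) ^ N * sin t\<bar> \<le> \<bar>c\<bar> ^ N"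
  by (simp add: abs_mult power_abs mult_left_le)

lemma mabk_profile_near_pi_half:
  assumes "cos \<alpha> = 0"
  shows "\<bar>mabk_profile N \<alpha> (pi/2 + y) - 2 powr ((real N - 1) / 2) * sin \<alpha> * cos (y/2) ^ N * cos (real N * y/2)\<bar>
           \<le> 2 powr ((real N - 1) / 2) * \<bar>sin (y/2)\<bar> ^ N"
proof -
  define K :: real where "K = 2 powr ((real N - 1) / 2)"
  define t where "t = real N * (pi/2 + y + pi/2)/2 - \<alpha>"
  have "sin (real N * y/2 + \<alpha>) = sin \<alpha> * cos (real N * y/2)"
    using assms by (simp add: sin_add)
  then have "mabk_profile N \<alpha> (pi/2 + y) - K * sin \<alpha> * cos (y/2) ^ N * cos (real N * y/2)
      = K * (cos (y/2 + pi/2) ^ N * sin t)"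
    by (simp add: mabk_profile_def K_def t_def add_divide_distrib algebra_simps)
  also have "\<bar>\<dots>\<bar> \<le> K * \<bar>sin (y/2)\<bar> ^ N"
    using abs_power_mult_sin_le[of "cos (y/2 + pi/2)" N t] by (simp add: K_def abs_mult cos_add)
  finally show ?thesis unfolding K_def .
qed

lemma mabk_profile_near_three_pi_half:
  assumes "cos \<alpha> = 0" and "odd N"
  shows "\<bar>mabk_profile N \<alpha> (3*pi/2 + y) + 2 powr ((real N - 1) / 2) * sin \<alpha> * cos (y/2) ^ N * cos (real N * y/2)\<bar>
           \<le> 2 powr ((real N - 1) / 2) * \<bar>sin (y/2)\<bar> ^ N"
proof -
  define K :: real where "K = 2 powr ((real N - 1) / 2)"
  define t where "t = real N * (3*pi/2 + y - pi/2)/2 + \<alpha>"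
  have "sin (real N * (3*pi/2 + y + pi/2)/2 - \<alpha>) = sin ((real N * y/2 - \<alpha>) + real N * pi)"
    by (rule arg_cong[where f = sin]) (simp add: field_simps)
  also have "\<dots> = sin \<alpha> * cos (real N * y/2)"
    using assms by (simp add: sin_add sin_diff)
  finally have "sin (real N * (3*pi/2 + y + pi/2)/2 - \<alpha>) = sin \<alpha> * cos (real N * y/2)" .
  moreover have "cos ((3*pi/2 + y + pi/2)/2) ^ N = - (cos (y/2) ^ N)"
  proof -
    have arg: "(3*pi/2 + y + pi/2)/2 = y/2 + pi" by (simp add: field_simps)
    show ?thesis unfolding arg using assms by (simp add: power_minus_odd)
  qed
  ultimately have "mabk_profile N \<alpha> (3*pi/2 + y) + K * sin \<alpha> * cos (y/2) ^ N * cos (real N * y/2)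
      = K * (cos ((3*pi/2 + y - pi/2)/2) ^ N * sin t)"
    by (simp add: mabk_profile_def K_def t_def algebra_simps)
  also have "\<bar>\<dots>\<bar> \<le> K * \<bar>sin (y/2)\<bar> ^ N"
  proof -
    have arg: "(3*pi/2 + y - pi/2)/2 = y/2 + pi/2" by (simp add: field_simps)
    show ?thesis unfolding arg
      using abs_power_mult_sin_le[of "cos (y/2 + pi/2)" N t] by (simp add: K_def abs_mult cos_add)
  qed
  finally show ?thesis unfolding K_def .
qed

lemma peak_profile_dip_three:
  "2 * (cos (pi/8) ^ 3 * cos (3*pi/8) + sin (pi/8) ^ 3) \<le> (1::real)"
proof -
  define t where "t = sin (pi/8)"
  have t_nonneg: "0 \<le> t" unfolding t_def by (rule sin_ge_zero) auto
  have "t \<le> pi/8" unfolding t_def by (rule sin_x_le_x) simp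
  then have t_le: "t \<le> 0.4" using pi_approx by simp
  have "cos (3*pi/8) = t"
    using cos_sin_eq[of "3*pi/8"] by (simp add: t_def field_simps)
  moreover have "cos (pi/8) ^ 3 * t \<le> t"
    using cos_gt_zero_pi[of "pi/8"] t_nonneg by (simp add: power_le_one mult_left_le_one_le)
  moreover have "t ^ 3 \<le> 0.4 ^ 3" by (rule power_mono[OF t_le t_nonneg])
  ultimately show ?thesis using t_le by (simp add: t_def power_divide)
qed

lemma peak_profile_dips_below_one:
  assumes "N \<ge> 3"
  obtains x where "0 < x" "x \<le> pi/4"
    "2 powr ((real N - 1) / 2) * (cos (x/2) ^ N * cos (real N * x/2) + sin (x/2) ^ N) \<le> 1"
proof (cases "N = 3")
  case True
  then show ?thesis using that[of "pi/4"] peak_profile_dip_three by (simp add: field_simps)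
next
  case False
  with assms have N4: "N \<ge> 4" by simp
  \<comment> \<open>at \<open>x = \<pi>/N\<close> the leading term vanishes; for \<open>N = 3\<close> this \<open>x\<close> is too large\<close>
  define x where "x = pi / real N"
  have x_pos: "0 < x" and x_le: "x \<le> pi/4" using N4 by (simp_all add: x_def field_simps)
  have "0 \<le> sin (x/2)" using x_pos x_le by (intro sin_ge_zero) auto
  moreover have "sin (x/2) \<le> 1/2"
    using sin_x_le_x[of "x/2"] x_pos x_le pi_approx by simp
  ultimately have "0 \<le> sin (x/2) ^ N" "sin (x/2) ^ N \<le> (1/2) ^ N" by (simp_all add: power_mono)
  moreover have "2 powr ((real N - 1) / 2) \<le> (2::real) ^ N"
    using powr_mono[of "(real N - 1) / 2" "real N" 2] by (simp add: powr_realpow)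
  ultimately have "2 powr ((real N - 1) / 2) * sin (x/2) ^ N \<le> 2 ^ N * (1/2) ^ N"
    by (intro mult_mono) auto
  also have "\<dots> = 1" by (simp add: power_mult_distrib[symmetric])
  finally show ?thesis using that[OF x_pos x_le] N4 by (simp add: x_def)
qed

lemma IVT2_strict:
  fixes f :: "real \<Rightarrow> real"
  assumes "continuous_on {a..b} f" "a \<le> b" "f b < y" "y < f a"
  shows "\<exists>x\<in>{a<..<b}. f x = y"
proof -
  obtain x where "a \<le> x" "x \<le> b" "f x = y"
    using IVT2'[of f b y a] assms by fastforce
  moreover from this assms have "x \<noteq> a" "x \<noteq> b" by auto
  ultimately show ?thesis by auto
qed

lemma attains_near_peak:
  fixes f :: "real \<Rightarrow> real" and N :: nat and c s :: real
  defines "K \<equiv> 2 powr ((real N - 1) / 2)"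
  assumes "continuous_on UNIV f" and "N \<ge> 3"
    and near: "\<And>y. \<bar>f (c + y) - K * cos (y/2) ^ N * cos (real N * y/2)\<bar> \<le> K * \<bar>sin (y/2)\<bar> ^ N"
    and "1 < s" "s < K"
  shows "\<exists>\<theta>\<in>{c<..<c + pi/4}. f \<theta> = s"
proof -
  obtain x where x: "0 < x" "x \<le> pi/4"
    and dip: "K * (cos (x/2) ^ N * cos (real N * x/2) + sin (x/2) ^ N) \<le> 1"
    using peak_profile_dips_below_one[OF \<open>N \<ge> 3\<close>] unfolding K_def by blast
  have "f c = K" using near[of 0] \<open>N \<ge> 3\<close> by (simp add: power_0_left)
  moreover have "f (c + x) \<le> 1"
  proof -
    have "0 \<le> sin (x/2)" using x by (intro sin_ge_zero) auto
    then show ?thesis using near[of x] dip by (simp add: algebra_simps)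
  qed
  moreover have "continuous_on {c..c + x} f"
    using \<open>continuous_on UNIV f\<close> by (rule continuous_on_subset) simp
  ultimately obtain \<theta> where "\<theta> \<in> {c<..<c + x}" "f \<theta> = s"
    using IVT2_strict[of c "c + x" f s] x \<open>1 < s\<close> \<open>s < K\<close> by auto
  then show ?thesis using x by auto
qed

lemma mabk_profile_attains:
  assumes "odd N" "N \<ge> 3" "cos \<alpha> = 0" "1 < s" "s < 2 powr ((real N - 1) / 2)"
  shows "\<exists>\<theta>\<in>G_set. s = mabk_profile N \<alpha> \<theta>"
proof -
  have cont: "continuous_on UNIV (mabk_profile N \<alpha>)"
    unfolding mabk_profile_def by (intro continuous_intros) auto
  have "sin \<alpha> = 1 \<or> sin \<alpha> = -1"
    using sin_cos_squared_add[of \<alpha>] \<open>cos \<alpha> = 0\<close> by (simp add: power2_eq_1_iff)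
  then show ?thesis
  proof
    assume "sin \<alpha> = 1"
    then obtain \<theta> where "\<theta> \<in> {pi/2<..<pi/2 + pi/4}" "mabk_profile N \<alpha> \<theta> = s"
      using attains_near_peak[OF cont \<open>N \<ge> 3\<close> _ \<open>1 < s\<close>] mabk_profile_near_pi_half[OF \<open>cos \<alpha> = 0\<close>]
        \<open>s < _\<close> by fastforce
    moreover have "{pi/2<..<pi/2 + pi/4} \<subseteq> G_set" by (auto simp: G_set_def)
    ultimately show ?thesis by auto
  next
    assume "sin \<alpha> = -1"
    then obtain \<theta> where "\<theta> \<in> {3*pi/2<..<3*pi/2 + pi/4}" "mabk_profile N \<alpha> \<theta> = s"
      using attains_near_peak[OF cont \<open>N \<ge> 3\<close> _ \<open>1 < s\<close>]
        mabk_profile_near_three_pi_half[OF \<open>cos \<alpha> = 0\<close> \<open>odd N\<close>] \<open>s < _\<close> by fastforce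
    moreover have "{3*pi/2<..<3*pi/2 + pi/4} \<subseteq> G_set" by (auto simp: G_set_def)
    ultimately show ?thesis by auto
  qed
qed

lemma cos_odd_multiple_pi_half: "odd n \<Longrightarrow> cos (real n * (pi/2)) = 0"
  unfolding cos_zero_iff by blast

theorem proposition5:
  fixes N :: nat and s :: real
  assumes "odd N" and "N \<ge> 3"
    and "1 < s" and "s < 2 powr ((real N - 1) / 2)"
  shows "\<exists>\<theta>\<in>G_set. (N mod 4 = 3 \<longrightarrow> s = M_val N \<theta>)
                      \<and> (N mod 4 = 1 \<longrightarrow> s = Mtilde_val N \<theta>)"
proof -
  have "N mod 4 = 3 \<or> N mod 4 = 1" using \<open>odd N\<close> by presburger
  then show ?thesis
  proof
    assume "N mod 4 = 3"
    then obtain q where "N = 4 * q + 3" using mult_div_mod_eq[of 4 N] by metis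
    then have phase: "pi * (real N - 1) / 4 = real (2 * q + 1) * (pi/2)" by (simp add: field_simps)
    have "cos (pi * (real N - 1) / 4) = 0" unfolding phase by (rule cos_odd_multiple_pi_half) simp
    from mabk_profile_attains[OF assms(1,2) this assms(3,4)] \<open>N mod 4 = 3\<close>
    show ?thesis by (simp add: M_val_eq_mabk_profile)
  next
    assume "N mod 4 = 1"
    then obtain q where "N = 4 * q + 1" using mult_div_mod_eq[of 4 N] by metis
    then have phase: "pi * (3 * real N - 1) / 4 = real (6 * q + 1) * (pi/2)" by (simp add: field_simps)
    have "cos (pi * (3 * real N - 1) / 4) = 0" unfolding phase by (rule cos_odd_multiple_pi_half) simp
    from mabk_profile_attains[OF assms(1,2) this assms(3,4)] \<open>N mod 4 = 1\<close>
    show ?thesis by (simp add: Mtilde_val_eq_mabk_profile[OF \<open>odd N\<close>])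
  qed
qed

end
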